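(* For every $n\ge 2$ and every pure state $|\psi\rangle$ on a set $V$ of $n$ qubits, the entanglement width satisfies $ew(|\psi\rangle)\le\lceil n/3\rceil$.
   Context: For a pure state $|\psi\rangle$ on a set $V$ of qubits and a bipartition $V=A\sqcup B$, with Schmidt decomposition $|\psi\rangle=\sum_i\alpha_i|\psi_i\rangle_A|\phi_i\rangle_B$ ($\alpha_i>0$), the bipartite entanglement entropy is $E_{A,B}(|\psi\rangle)=-\sum_i\alpha_i^2\log_2(\alpha_i^2)$. A subcubic tree is a tree with all vertex degrees at most 3. A branch decomposition of $V$ is a pair $(T,\mathcal{L})$ where $T$ is a subcubic tree and $\mathcal{L}$ a bijection from the leaves of $T$ to $V$; removing an edge $e$ of $T$ splits the leaves into two sets, hence via $\mathcal{L}$ induces a bipartition $A^e\sqcup B^e$ of $V$. The width of $(T,\mathcal{L})$ is $\max_{e\in E(T)}E_{A^e,B^e}(|\psi\rangle)$, and the entanglement width $ew(|\psi\rangle)$ is the minimum width over all branch decompositions of $V$. *)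

theory Defs
  imports Complex_Main
begin

(* Qubits are elements of a type 'a; a pure state on the finite qubit set V is
   given by its amplitudes in the computational basis.  A computational basis
   state of V is identified with the subset S \<subseteq> V of qubits in state |1>. *)

definition pure_state :: "'a set \<Rightarrow> ('a set \<Rightarrow> complex) \<Rightarrow> bool" where
  "pure_state V \<psi> \<longleftrightarrow> finite V \<and> (\<forall>S. \<not> S \<subseteq> V \<longrightarrow> \<psi> S = 0)
     \<and> (\<Sum>S\<in>Pow V. (cmod (\<psi> S))\<^sup>2) = 1"

definition orthonormal_family :: "'a set \<Rightarrow> (nat \<Rightarrow> 'a set \<Rightarrow> complex) \<Rightarrow> nat \<Rightarrow> bool" where
  "orthonormal_family A f k \<longleftrightarrow>
     (\<forall>i<k. \<forall>j<k. (\<Sum>S\<in>Pow A. cnj (f i S) * f j S) = (if i = j then 1 else 0))"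

definition schmidt_decomp ::
  "'a set \<Rightarrow> 'a set \<Rightarrow> ('a set \<Rightarrow> complex) \<Rightarrow> nat \<Rightarrow> (nat \<Rightarrow> real)
     \<Rightarrow> (nat \<Rightarrow> 'a set \<Rightarrow> complex) \<Rightarrow> (nat \<Rightarrow> 'a set \<Rightarrow> complex) \<Rightarrow> bool" where
  "schmidt_decomp V A \<psi> k \<alpha> f g \<longleftrightarrow>
     (\<forall>i<k. \<alpha> i > 0) \<and> orthonormal_family A f k \<and> orthonormal_family (V - A) g k \<and>
     (\<forall>S\<subseteq>V. \<psi> S = (\<Sum>i<k. complex_of_real (\<alpha> i) * f i (S \<inter> A) * g i (S - A)))"

definition ent_entropy :: "'a set \<Rightarrow> 'a set \<Rightarrow> ('a set \<Rightarrow> complex) \<Rightarrow> real" where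
  "ent_entropy V A \<psi> = (SOME h. \<exists>k \<alpha> f g. schmidt_decomp V A \<psi> k \<alpha> f g \<and>
       h = - (\<Sum>i<k. (\<alpha> i)\<^sup>2 * log 2 ((\<alpha> i)\<^sup>2)))"

definition adj_rel :: "nat set set \<Rightarrow> (nat \<times> nat) set" where
  "adj_rel E = {(x, y). {x, y} \<in> E}"

definition is_tree :: "nat set \<Rightarrow> nat set set \<Rightarrow> bool" where
  "is_tree N E \<longleftrightarrow> finite N \<and> N \<noteq> {} \<and>
     (\<forall>e\<in>E. \<exists>x y. e = {x, y} \<and> x \<noteq> y \<and> x \<in> N \<and> y \<in> N) \<and>
     (\<forall>x\<in>N. \<forall>y\<in>N. (x, y) \<in> (adj_rel E)\<^sup>*) \<and>
     (\<forall>e\<in>E. \<forall>x y. e = {x, y} \<longrightarrow> (x, y) \<notin> (adj_rel (E - {e}))\<^sup>*)"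

definition degree :: "nat set set \<Rightarrow> nat \<Rightarrow> nat" where
  "degree E v = card {e\<in>E. v \<in> e}"

definition subcubic_tree :: "nat set \<Rightarrow> nat set set \<Rightarrow> bool" where
  "subcubic_tree N E \<longleftrightarrow> is_tree N E \<and> (\<forall>v\<in>N. degree E v \<le> 3)"

definition leaves :: "nat set \<Rightarrow> nat set set \<Rightarrow> nat set" where
  "leaves N E = {v\<in>N. degree E v = 1}"

definition branch_decomp :: "'a set \<Rightarrow> nat set \<Rightarrow> nat set set \<Rightarrow> (nat \<Rightarrow> 'a) \<Rightarrow> bool" where
  "branch_decomp V N E L \<longleftrightarrow> subcubic_tree N E \<and> bij_betw L (leaves N E) V"

definition edge_side :: "nat set \<Rightarrow> nat set set \<Rightarrow> (nat \<Rightarrow> 'a) \<Rightarrow> nat set \<Rightarrow> 'a set" where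
  "edge_side N E L e =
     L ` {w \<in> leaves N E. ((SOME u. u \<in> e), w) \<in> (adj_rel (E - {e}))\<^sup>*}"

definition bd_width :: "'a set \<Rightarrow> ('a set \<Rightarrow> complex) \<Rightarrow> nat set \<Rightarrow> nat set set \<Rightarrow> (nat \<Rightarrow> 'a) \<Rightarrow> real" where
  "bd_width V \<psi> N E L = Max ((\<lambda>e. ent_entropy V (edge_side N E L e) \<psi>) ` E)"

definition ent_width :: "'a set \<Rightarrow> ('a set \<Rightarrow> complex) \<Rightarrow> real" where
  "ent_width V \<psi> = Inf {bd_width V \<psi> N E L | N E L. branch_decomp V N E L}"

end

theory Submission
  imports Defs "HOL-Analysis.Analysis"
begin

(* Every bipartite entanglement entropy E_{A,V-A} is at most min(|A|, |V - A|). A Schmidt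
   decomposition exists because every matrix has a singular value decomposition, obtained here by
   repeatedly splitting off from the residual a singular pair that attains its operator norm; the
   Schmidt rank k is at most the dimension of either side, 2^|A| resp. 2^|V - A|; and the Shannon
   entropy of k positive weights is at most log2 k.
   So it suffices to give a branch decomposition each of whose edges cuts off at most
   q = ceil (n / 3) qubits on one side. Split the qubits into three blocks of at most q consecutive
   ones and hang each block as a caterpillar from a common root: removing any edge separates leaves
   of a single block from the rest. *)

section \<open>Functions on a finite set as a unitary space\<close>

definition inner_on :: "'x set \<Rightarrow> ('x \<Rightarrow> complex) \<Rightarrow> ('x \<Rightarrow> complex) \<Rightarrow> complex" where
  "inner_on X u v = (\<Sum>x\<in>X. cnj (u x) * v x)"

definition sqnorm_on :: "'x set \<Rightarrow> ('x \<Rightarrow> complex) \<Rightarrow> real" where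
  "sqnorm_on X u = (\<Sum>x\<in>X. (cmod (u x))\<^sup>2)"

definition orthonormal_on :: "'x set \<Rightarrow> (nat \<Rightarrow> 'x \<Rightarrow> complex) \<Rightarrow> nat \<Rightarrow> bool" where
  "orthonormal_on X f k \<longleftrightarrow> (\<forall>i<k. \<forall>j<k. inner_on X (f i) (f j) = (if i = j then 1 else 0))"

lemma orthonormal_family_iff: "orthonormal_family A f k \<longleftrightarrow> orthonormal_on (Pow A) f k"
  unfolding orthonormal_family_def orthonormal_on_def inner_on_def ..

lemma inner_on_self: "inner_on X u u = complex_of_real (sqnorm_on X u)"
  unfolding inner_on_def sqnorm_on_def
  by (simp add: of_real_sum complex_norm_square mult.commute del: of_real_power)

lemma sqnorm_on_nonneg: "0 \<le> sqnorm_on X u"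
  unfolding sqnorm_on_def by (simp add: sum_nonneg)

lemma sqnorm_on_eq_0D: "finite X \<Longrightarrow> sqnorm_on X u = 0 \<Longrightarrow> x \<in> X \<Longrightarrow> u x = 0"
  unfolding sqnorm_on_def by (simp add: sum_nonneg_eq_0_iff)

lemma sqnorm_on_scale: "sqnorm_on X (\<lambda>x. c * u x) = (cmod c)\<^sup>2 * sqnorm_on X u"
  unfolding sqnorm_on_def by (simp add: sum_distrib_left norm_mult power_mult_distrib)

lemma sqnorm_on_eq_1_iff: "sqnorm_on X u = 1 \<longleftrightarrow> inner_on X u u = 1"
  by (metis inner_on_self of_real_eq_1_iff)

lemma orthonormal_on_sqnorm: "orthonormal_on X f k \<Longrightarrow> i < k \<Longrightarrow> sqnorm_on X (f i) = 1"
  unfolding orthonormal_on_def sqnorm_on_eq_1_iff by simp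

lemma sqnorm_on_indicator:
  assumes "finite X" "x \<in> X"
  shows "sqnorm_on X (\<lambda>y. if y = x then 1 else 0) = 1"
proof -
  have "sqnorm_on X (\<lambda>y. if y = x then 1 else 0) = (\<Sum>y\<in>X. if y = x then 1 else 0)"
    unfolding sqnorm_on_def by (intro sum.cong) auto
  thus ?thesis using assms by simp
qed

lemma cnj_inner_on: "cnj (inner_on X u v) = inner_on X v u"
  unfolding inner_on_def by (simp add: mult.commute)

lemma inner_on_sum_left: "inner_on X (\<lambda>x. \<Sum>i\<in>I. u i x) v = (\<Sum>i\<in>I. inner_on X (u i) v)"
  unfolding inner_on_def by (simp add: sum_distrib_right sum.swap[of _ X])

lemma inner_on_sum_right: "inner_on X u (\<lambda>x. \<Sum>i\<in>I. v i x) = (\<Sum>i\<in>I. inner_on X u (v i))"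
  unfolding inner_on_def by (simp add: sum_distrib_left sum.swap[of _ X])

lemma inner_on_scale_left: "inner_on X (\<lambda>x. c * u x) v = cnj c * inner_on X u v"
  unfolding inner_on_def by (simp add: sum_distrib_left algebra_simps)

lemma inner_on_scale_right: "inner_on X u (\<lambda>x. c * v x) = c * inner_on X u v"
  unfolding inner_on_def by (simp add: sum_distrib_left algebra_simps)

lemma inner_on_diff_left: "inner_on X (\<lambda>x. u x - w x) v = inner_on X u v - inner_on X w v"
  unfolding inner_on_def by (simp add: sum_subtractf algebra_simps)

lemma inner_on_diff_right: "inner_on X u (\<lambda>x. v x - w x) = inner_on X u v - inner_on X u w"
  unfolding inner_on_def by (simp add: sum_subtractf algebra_simps)

lemma cauchy_schwarz_inner_on: "(cmod (inner_on X u v))\<^sup>2 \<le> sqnorm_on X u * sqnorm_on X v"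
proof -
  have "cmod (inner_on X u v) \<le> (\<Sum>x\<in>X. cmod (u x) * cmod (v x))"
    unfolding inner_on_def by (rule order_trans[OF norm_sum]) (simp add: norm_mult)
  hence "(cmod (inner_on X u v))\<^sup>2 \<le> (\<Sum>x\<in>X. cmod (u x) * cmod (v x))\<^sup>2"
    by (simp add: power_mono)
  also have "\<dots> \<le> sqnorm_on X u * sqnorm_on X v"
    unfolding sqnorm_on_def by (rule Cauchy_Schwarz_ineq_sum)
  finally show ?thesis .
qed

lemma inner_on_orthonormal_combination:
  assumes "orthonormal_on X f k" "j < k"
  shows "inner_on X (f j) (\<lambda>x. \<Sum>i<k. c i * f i x) = c j"
proof -
  have "inner_on X (f j) (\<lambda>x. \<Sum>i<k. c i * f i x) = (\<Sum>i<k. c i * inner_on X (f j) (f i))"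
    by (simp add: inner_on_sum_right inner_on_scale_right)
  also have "\<dots> = (\<Sum>i<k. if i = j then c i else 0)"
    using assms unfolding orthonormal_on_def by (intro sum.cong) auto
  also have "\<dots> = c j" using assms(2) by simp
  finally show ?thesis .
qed

lemma inner_on_combination_left:
  "inner_on X (\<lambda>x. \<Sum>i<k. c i * f i x) v = (\<Sum>i<k. cnj (c i) * inner_on X (f i) v)"
  by (simp add: inner_on_sum_left inner_on_scale_left)

lemma sum_cnj_mult_self: "(\<Sum>i\<in>I. cnj (c i) * c i) = complex_of_real (\<Sum>i\<in>I. (cmod (c i))\<^sup>2)"
  by (simp add: of_real_sum complex_norm_square mult.commute del: of_real_power)

lemma sqnorm_on_orthonormal_combination:
  assumes "orthonormal_on X f k"
  shows "sqnorm_on X (\<lambda>x. \<Sum>i<k. c i * f i x) = (\<Sum>i<k. (cmod (c i))\<^sup>2)"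
proof -
  have "complex_of_real (sqnorm_on X (\<lambda>x. \<Sum>i<k. c i * f i x)) = (\<Sum>i<k. cnj (c i) * c i)"
    unfolding inner_on_self[symmetric] inner_on_combination_left
    using inner_on_orthonormal_combination[OF assms] by simp
  thus ?thesis unfolding sum_cnj_mult_self of_real_eq_iff .
qed

lemma bessel_inequality:
  assumes "orthonormal_on X f k"
  shows "(\<Sum>i<k. (cmod (inner_on X (f i) v))\<^sup>2) \<le> sqnorm_on X v"
proof -
  define c where "c i = inner_on X (f i) v" for i
  define s where "s x = (\<Sum>i<k. c i * f i x)" for x
  have "inner_on X s v = complex_of_real (\<Sum>i<k. (cmod (c i))\<^sup>2)"
    unfolding s_def inner_on_combination_left sum_cnj_mult_self[symmetric] c_def ..
  moreover have "inner_on X s s = complex_of_real (\<Sum>i<k. (cmod (c i))\<^sup>2)"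
    unfolding s_def inner_on_self sqnorm_on_orthonormal_combination[OF assms] ..
  ultimately have "complex_of_real (sqnorm_on X (\<lambda>x. v x - s x))
      = complex_of_real (sqnorm_on X v - (\<Sum>i<k. (cmod (c i))\<^sup>2))"
    unfolding inner_on_self[symmetric] inner_on_diff_left inner_on_diff_right
    by (simp flip: cnj_inner_on[of X s v] add: inner_on_self)
  hence "sqnorm_on X (\<lambda>x. v x - s x) = sqnorm_on X v - (\<Sum>i<k. (cmod (c i))\<^sup>2)"
    using of_real_eq_iff by blast
  with sqnorm_on_nonneg[of X "\<lambda>x. v x - s x"] show ?thesis by (simp add: c_def)
qed

lemma orthonormal_on_card_le:
  assumes "finite X" "orthonormal_on X f k"
  shows "k \<le> card X"
proof -
  have "(\<Sum>i<k. (cmod (f i x))\<^sup>2) \<le> 1" if "x \<in> X" for x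
  proof -
    define e where "e y = (if y = x then 1 else 0 :: complex)" for y
    have "inner_on X (f i) e = cnj (f i x)" for i
      unfolding inner_on_def e_def using assms(1) that
      by (simp add: if_distrib sum.delta cong: if_cong)
    moreover have "sqnorm_on X e = 1"
      unfolding e_def by (rule sqnorm_on_indicator[OF assms(1) that])
    ultimately show ?thesis using bessel_inequality[OF assms(2), of e] by simp
  qed
  hence "(\<Sum>x\<in>X. \<Sum>i<k. (cmod (f i x))\<^sup>2) \<le> (\<Sum>x\<in>X. 1)"
    by (rule sum_mono)
  moreover have "(\<Sum>x\<in>X. \<Sum>i<k. (cmod (f i x))\<^sup>2) = (\<Sum>i<k. sqnorm_on X (f i))"
    unfolding sqnorm_on_def by (rule sum.swap)
  ultimately show ?thesis using orthonormal_on_sqnorm[OF assms(2)] by simp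
qed

section \<open>Singular value decomposition\<close>

definition mat_apply :: "'y set \<Rightarrow> ('x \<Rightarrow> 'y \<Rightarrow> complex) \<Rightarrow> ('y \<Rightarrow> complex) \<Rightarrow> 'x \<Rightarrow> complex" where
  "mat_apply Y R w x = (\<Sum>y\<in>Y. R x y * w y)"

definition adjoint_apply :: "'x set \<Rightarrow> ('x \<Rightarrow> 'y \<Rightarrow> complex) \<Rightarrow> ('x \<Rightarrow> complex) \<Rightarrow> 'y \<Rightarrow> complex" where
  "adjoint_apply X R u y = (\<Sum>x\<in>X. cnj (R x y) * u x)"

lemma inner_on_mat_apply: "inner_on X (mat_apply Y R w) u = inner_on Y w (adjoint_apply X R u)"
proof -
  have "inner_on X (mat_apply Y R w) u = (\<Sum>x\<in>X. \<Sum>y\<in>Y. cnj (w y) * (cnj (R x y) * u x))"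
    unfolding inner_on_def mat_apply_def
    by (simp add: sum_distrib_left sum_distrib_right mult_ac)
  also have "\<dots> = inner_on Y w (adjoint_apply X R u)"
    unfolding inner_on_def adjoint_apply_def by (simp add: sum_distrib_left sum.swap[of _ X])
  finally show ?thesis .
qed

lemma mat_apply_scale: "mat_apply Y R (\<lambda>y. c * w y) x = c * mat_apply Y R w x"
  unfolding mat_apply_def by (simp add: sum_distrib_left mult_ac)

lemma compact_unit_sphere_on:
  assumes "finite Y"
  shows "compact {w :: 'y \<Rightarrow> complex. (\<forall>y. y \<notin> Y \<longrightarrow> w y = 0) \<and> sqnorm_on Y w = 1}"
proof -
  define K where "K = PiE UNIV (\<lambda>y. if y \<in> Y then cball (0::complex) 1 else {0})"
  have "compactin (product_topology (\<lambda>_. euclidean) UNIV) K"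
    unfolding K_def by (subst compactin_PiE) auto
  hence "compact K" by (metis compactin_euclidean_iff euclidean_product_topology)
  moreover have "closed {w :: 'y \<Rightarrow> complex. sqnorm_on Y w = 1}"
    unfolding sqnorm_on_def
    by (intro closed_Collect_eq continuous_intros continuous_on_product_coordinates)
  moreover have "{w. (\<forall>y. y \<notin> Y \<longrightarrow> w y = 0) \<and> sqnorm_on Y w = 1} = K \<inter> {w. sqnorm_on Y w = 1}"
  proof (auto simp: K_def PiE_iff)
    fix w :: "'y \<Rightarrow> complex" and y assume "y \<in> Y" "sqnorm_on Y w = 1"
    hence "(cmod (w y))\<^sup>2 \<le> 1"
      unfolding sqnorm_on_def by (metis assms member_le_sum zero_le_power2)
    thus "cmod (w y) \<le> 1" by (simp add: power_le_one_iff)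
  next
    fix w :: "'y \<Rightarrow> complex" and y
    assume "\<forall>y. w y \<in> (if y \<in> Y then cball 0 1 else {0})" "y \<notin> Y"
    thus "w y = 0" by (metis singletonD)
  qed
  ultimately show ?thesis by (metis compact_Int_closed)
qed

lemma sqnorm_mat_apply_le_homogeneous:
  assumes "finite Y"
    and unit: "\<And>v. (\<forall>y. y \<notin> Y \<longrightarrow> v y = 0) \<Longrightarrow> sqnorm_on Y v = 1 \<Longrightarrow> sqnorm_on X (mat_apply Y R v) \<le> F"
  shows "sqnorm_on X (mat_apply Y R w) \<le> F * sqnorm_on Y w"
proof (cases "sqnorm_on Y w = 0")
  case True
  hence "mat_apply Y R w x = 0" for x
    unfolding mat_apply_def using sqnorm_on_eq_0D[OF assms(1) True] by simp
  thus ?thesis using True by (simp add: sqnorm_on_def)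
next
  case False
  hence t: "0 < sqnorm_on Y w" using sqnorm_on_nonneg[of Y w] by linarith
  define c where "c = complex_of_real (1 / sqrt (sqnorm_on Y w))"
  have "cmod c = 1 / sqrt (sqnorm_on Y w)" unfolding c_def using t by (simp add: norm_divide)
  hence c: "(cmod c)\<^sup>2 * sqnorm_on Y w = 1" using t by (simp add: power_divide)
  define v where "v y = (if y \<in> Y then c * w y else 0)" for y
  have "sqnorm_on Y v = sqnorm_on Y (\<lambda>y. c * w y)" "mat_apply Y R v = mat_apply Y R (\<lambda>y. c * w y)"
    unfolding sqnorm_on_def mat_apply_def v_def by (auto intro!: sum.cong)
  hence "sqnorm_on Y v = 1"
    "sqnorm_on X (mat_apply Y R v) = (cmod c)\<^sup>2 * sqnorm_on X (mat_apply Y R w)"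
    using c by (auto simp: sqnorm_on_scale mat_apply_scale[abs_def])
  with unit[of v] have "(cmod c)\<^sup>2 * sqnorm_on X (mat_apply Y R w) \<le> F"
    by (simp add: v_def)
  hence "(cmod c)\<^sup>2 * sqnorm_on X (mat_apply Y R w) * sqnorm_on Y w \<le> F * sqnorm_on Y w"
    using sqnorm_on_nonneg by (rule mult_right_mono)
  moreover have "(cmod c)\<^sup>2 * sqnorm_on X (mat_apply Y R w) * sqnorm_on Y w
      = sqnorm_on X (mat_apply Y R w) * ((cmod c)\<^sup>2 * sqnorm_on Y w)"
    by (simp only: mult_ac)
  ultimately show ?thesis using c by simp
qed

lemma exists_norm_attaining_vector:
  fixes R :: "'x \<Rightarrow> 'y \<Rightarrow> complex"
  assumes "finite Y" "Y \<noteq> {}"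
  obtains w0 where "sqnorm_on Y w0 = 1"
    "\<And>w. sqnorm_on X (mat_apply Y R w) \<le> sqnorm_on X (mat_apply Y R w0) * sqnorm_on Y w"
proof -
  define S where "S = {w :: 'y \<Rightarrow> complex. (\<forall>y. y \<notin> Y \<longrightarrow> w y = 0) \<and> sqnorm_on Y w = 1}"
  obtain y0 where "y0 \<in> Y" using assms(2) by blast
  hence "(\<lambda>y. if y = y0 then 1 else 0) \<in> S"
    unfolding S_def using sqnorm_on_indicator[OF assms(1)] by auto
  moreover have "continuous_on S (\<lambda>w. sqnorm_on X (mat_apply Y R w))"
    unfolding sqnorm_on_def mat_apply_def
    by (intro continuous_intros continuous_on_subset[OF continuous_on_product_coordinates]) simp
  ultimately obtain w0 where "w0 \<in> S" and "\<And>w. w \<in> S \<Longrightarrow>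
      sqnorm_on X (mat_apply Y R w) \<le> sqnorm_on X (mat_apply Y R w0)"
    using continuous_attains_sup[OF compact_unit_sphere_on[OF assms(1)], folded S_def] by blast
  with sqnorm_mat_apply_le_homogeneous[OF assms(1)] show ?thesis
    using that unfolding S_def by blast
qed

lemma adjoint_apply_norm_attaining_vector:
  fixes \<sigma> :: real and u :: "'x \<Rightarrow> complex" and w :: "'y \<Rightarrow> complex"
  assumes "finite Y" "sqnorm_on X u = 1" "sqnorm_on Y w = 1"
    and image: "\<And>x. x \<in> X \<Longrightarrow> mat_apply Y R w x = complex_of_real \<sigma> * u x"
    and bound: "\<And>v. sqnorm_on X (mat_apply Y R v) \<le> \<sigma>\<^sup>2 * sqnorm_on Y v"
    and y: "y \<in> Y"
  shows "adjoint_apply X R u y = complex_of_real \<sigma> * w y"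
proof -
  (* With z = R^* u: <w, z> = sigma and, by Cauchy-Schwarz, |z|^2 <= sigma^2;
     hence |z - sigma w|^2 = |z|^2 - sigma^2 <= 0. *)
  define z where "z = adjoint_apply X R u"
  have "inner_on Y w z = inner_on X (mat_apply Y R w) u"
    unfolding z_def inner_on_mat_apply ..
  also have "\<dots> = inner_on X (\<lambda>x. complex_of_real \<sigma> * u x) u"
    unfolding inner_on_def using image by simp
  finally have wz: "inner_on Y w z = \<sigma>"
    using assms(2) by (simp add: inner_on_scale_left inner_on_self)
  have "(sqnorm_on Y z)\<^sup>2 = (cmod (inner_on X (mat_apply Y R z) u))\<^sup>2"
    unfolding z_def inner_on_mat_apply by (simp add: inner_on_self)
  also have "\<dots> \<le> \<sigma>\<^sup>2 * sqnorm_on Y z"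
    using cauchy_schwarz_inner_on[of X "mat_apply Y R z" u] bound[of z] assms(2) by simp
  finally have "sqnorm_on Y z \<le> \<sigma>\<^sup>2"
    using sqnorm_on_nonneg[of Y z] by (cases "sqnorm_on Y z = 0") (auto simp: power2_eq_square)
  moreover have "complex_of_real (sqnorm_on Y (\<lambda>y. z y - \<sigma> * w y))
      = complex_of_real (sqnorm_on Y z - \<sigma>\<^sup>2)"
    unfolding inner_on_self[symmetric] inner_on_diff_left inner_on_diff_right
      inner_on_scale_left inner_on_scale_right
    using wz cnj_inner_on[of Y w z] assms(3) by (simp add: inner_on_self power2_eq_square)
  ultimately have "sqnorm_on Y (\<lambda>y. z y - \<sigma> * w y) = 0"
    using sqnorm_on_nonneg[of Y "\<lambda>y. z y - \<sigma> * w y"] unfolding of_real_eq_iff by linarith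
  from sqnorm_on_eq_0D[OF assms(1) this y] show ?thesis unfolding z_def by simp
qed

lemma top_singular_pair:
  fixes R :: "'x \<Rightarrow> 'y \<Rightarrow> complex"
  assumes "finite X" "finite Y" "x0 \<in> X" "y0 \<in> Y" "R x0 y0 \<noteq> 0"
  obtains \<sigma> u w where "0 < \<sigma>" "sqnorm_on X u = 1" "sqnorm_on Y w = 1"
    "\<And>x. x \<in> X \<Longrightarrow> mat_apply Y R w x = complex_of_real \<sigma> * u x"
    "\<And>y. y \<in> Y \<Longrightarrow> adjoint_apply X R u y = complex_of_real \<sigma> * w y"
proof -
  obtain w where w: "sqnorm_on Y w = 1" and
    max: "\<And>v. sqnorm_on X (mat_apply Y R v) \<le> sqnorm_on X (mat_apply Y R w) * sqnorm_on Y v"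
    using exists_norm_attaining_vector[OF assms(2)] assms(4) by blast
  define e where "e y = (if y = y0 then 1 else 0 :: complex)" for y
  have "sqnorm_on Y e = 1" unfolding e_def by (rule sqnorm_on_indicator[OF assms(2,4)])
  moreover have "mat_apply Y R e x = R x y0" for x
    unfolding mat_apply_def e_def using assms(2,4) by (simp add: if_distrib sum.delta cong: if_cong)
  hence "(cmod (R x0 y0))\<^sup>2 \<le> sqnorm_on X (mat_apply Y R e)"
    unfolding sqnorm_on_def using assms(1,3) by (auto intro: member_le_sum)
  moreover have "0 < (cmod (R x0 y0))\<^sup>2" using assms(5) by simp
  moreover have "sqnorm_on X (mat_apply Y R e) \<le> sqnorm_on X (mat_apply Y R w)"
    using max[of e] \<open>sqnorm_on Y e = 1\<close> by simp
  ultimately have "0 < sqnorm_on X (mat_apply Y R w)" by linarith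
  then obtain \<sigma> where \<sigma>: "0 < \<sigma>" "\<sigma>\<^sup>2 = sqnorm_on X (mat_apply Y R w)"
    by (metis real_sqrt_gt_0_iff real_sqrt_pow2 less_imp_le)
  define u where "u x = complex_of_real (1 / \<sigma>) * mat_apply Y R w x" for x
  have image: "mat_apply Y R w x = complex_of_real \<sigma> * u x" for x
    unfolding u_def using \<sigma>(1) by simp
  have "sqnorm_on X u = (1 / \<sigma>)\<^sup>2 * \<sigma>\<^sup>2"
    unfolding u_def[abs_def] sqnorm_on_scale \<sigma>(2) using \<sigma>(1) by (simp add: norm_divide)
  hence "sqnorm_on X u = 1" using \<sigma>(1) by (simp add: power_divide)
  have "\<And>v. sqnorm_on X (mat_apply Y R v) \<le> \<sigma>\<^sup>2 * sqnorm_on Y v"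
    using max by (simp add: \<sigma>(2))
  from adjoint_apply_norm_attaining_vector[OF assms(2) \<open>sqnorm_on X u = 1\<close> w image this]
  show ?thesis using that \<sigma>(1) \<open>sqnorm_on X u = 1\<close> w image by blast
qed

(* The singular vectors found so far annihilate the residual from both sides, so the singular
   vectors of the residual are orthogonal to them and the families can be extended. *)
definition svd_residual :: "('x \<Rightarrow> 'y \<Rightarrow> complex) \<Rightarrow> (nat \<Rightarrow> real) \<Rightarrow> (nat \<Rightarrow> 'x \<Rightarrow> complex)
    \<Rightarrow> (nat \<Rightarrow> 'y \<Rightarrow> complex) \<Rightarrow> nat \<Rightarrow> 'x \<Rightarrow> 'y \<Rightarrow> complex" where
  "svd_residual M \<alpha> f g m x y = M x y - (\<Sum>i<m. complex_of_real (\<alpha> i) * f i x * g i y)"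

definition partial_svd :: "'x set \<Rightarrow> 'y set \<Rightarrow> ('x \<Rightarrow> 'y \<Rightarrow> complex) \<Rightarrow> nat \<Rightarrow> (nat \<Rightarrow> real)
    \<Rightarrow> (nat \<Rightarrow> 'x \<Rightarrow> complex) \<Rightarrow> (nat \<Rightarrow> 'y \<Rightarrow> complex) \<Rightarrow> bool" where
  "partial_svd X Y M m \<alpha> f g \<longleftrightarrow> (\<forall>i<m. 0 < \<alpha> i) \<and> orthonormal_on X f m \<and> orthonormal_on Y g m \<and>
     (\<forall>i<m. \<forall>y\<in>Y. (\<Sum>x\<in>X. cnj (f i x) * svd_residual M \<alpha> f g m x y) = 0) \<and>
     (\<forall>i<m. \<forall>x\<in>X. (\<Sum>y\<in>Y. svd_residual M \<alpha> f g m x y * cnj (g i y)) = 0)"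

lemma svd_residual_extend:
  "svd_residual M (\<alpha>(m := \<sigma>)) (f(m := u)) (g(m := h)) (Suc m) x y
     = svd_residual M \<alpha> f g m x y - complex_of_real \<sigma> * u x * h y"
proof -
  have "(\<Sum>i<m. complex_of_real ((\<alpha>(m := \<sigma>)) i) * (f(m := u)) i x * (g(m := h)) i y)
      = (\<Sum>i<m. complex_of_real (\<alpha> i) * f i x * g i y)"
    by (intro sum.cong) auto
  thus ?thesis unfolding svd_residual_def by (simp add: algebra_simps)
qed

lemma orthonormal_on_extend:
  assumes "orthonormal_on X f m" "inner_on X u u = 1" "\<And>i. i < m \<Longrightarrow> inner_on X (f i) u = 0"
  shows "orthonormal_on X (f(m := u)) (Suc m)"
proof -
  have "inner_on X u (f i) = 0" if "i < m" for i
    using assms(3)[OF that] cnj_inner_on[of X "f i" u] by simp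
  thus ?thesis using assms unfolding orthonormal_on_def by (auto simp: less_Suc_eq)
qed

lemma inner_on_eq_0_if_annihilates:
  assumes "c \<noteq> 0"
    and "\<And>y. y \<in> Y \<Longrightarrow> (\<Sum>x\<in>X. cnj (a x) * R x y) = 0"
    and "\<And>x. x \<in> X \<Longrightarrow> (\<Sum>y\<in>Y. R x y * b y) = c * u x"
  shows "inner_on X a u = 0"
proof -
  have "c * inner_on X a u = (\<Sum>x\<in>X. cnj (a x) * (c * u x))"
    unfolding inner_on_def by (simp add: sum_distrib_left mult_ac)
  also have "\<dots> = (\<Sum>x\<in>X. cnj (a x) * (\<Sum>y\<in>Y. R x y * b y))"
    using assms(3) by simp
  also have "\<dots> = (\<Sum>y\<in>Y. (\<Sum>x\<in>X. cnj (a x) * R x y) * b y)"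
    by (simp add: sum_distrib_left sum_distrib_right mult.assoc sum.swap[of _ X])
  finally show ?thesis using assms(1,2) by simp
qed

lemma sum_cnj_mult_rank_one_diff:
  "(\<Sum>x\<in>X. cnj (a x) * (R x y - c * u x * h y))
     = (\<Sum>x\<in>X. cnj (a x) * R x y) - c * inner_on X a u * h y"
  unfolding inner_on_def
  by (simp add: right_diff_distrib sum_subtractf sum_distrib_left sum_distrib_right mult_ac)

lemma sum_rank_one_diff_mult_cnj:
  "(\<Sum>y\<in>Y. (R x y - c * u x * h y) * cnj (b y))
     = (\<Sum>y\<in>Y. R x y * cnj (b y)) - c * u x * inner_on Y b h"
  unfolding inner_on_def
  by (simp add: left_diff_distrib right_diff_distrib sum_subtractf sum_distrib_left
      sum_distrib_right mult_ac)

lemma partial_svd_step: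
  assumes "finite X" "finite Y" and P: "partial_svd X Y M m \<alpha> f g"
    and "x0 \<in> X" "y0 \<in> Y" "svd_residual M \<alpha> f g m x0 y0 \<noteq> 0"
  shows "\<exists>\<alpha>' f' g'. partial_svd X Y M (Suc m) \<alpha>' f' g'"
proof -
  define R where "R = svd_residual M \<alpha> f g m"
  obtain \<sigma> u w where \<sigma>: "0 < \<sigma>" and u: "inner_on X u u = 1" and w: "sqnorm_on Y w = 1"
    and image: "\<And>x. x \<in> X \<Longrightarrow> mat_apply Y R w x = complex_of_real \<sigma> * u x"
    and coimage: "\<And>y. y \<in> Y \<Longrightarrow> adjoint_apply X R u y = complex_of_real \<sigma> * w y"
    using top_singular_pair[OF assms(1,2,4,5), of R] assms(6)
    unfolding R_def sqnorm_on_eq_1_iff by metis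
  define h where "h y = cnj (w y)" for y
  have h: "inner_on Y h h = 1"
    using w unfolding sqnorm_on_eq_1_iff[symmetric] sqnorm_on_def h_def by simp
  have hR: "(\<Sum>y\<in>Y. R x y * cnj (h y)) = complex_of_real \<sigma> * u x" if "x \<in> X" for x
    using image[OF that] unfolding mat_apply_def h_def by simp
  have uR: "(\<Sum>x\<in>X. cnj (u x) * R x y) = complex_of_real \<sigma> * h y" if "y \<in> Y" for y
    using arg_cong[OF coimage[OF that], of cnj] unfolding adjoint_apply_def h_def
    by (simp add: mult.commute)
  from P have \<alpha>: "\<forall>i<m. 0 < \<alpha> i" and f: "orthonormal_on X f m" and g: "orthonormal_on Y g m"
    and fR: "\<And>i y. i < m \<Longrightarrow> y \<in> Y \<Longrightarrow> (\<Sum>x\<in>X. cnj (f i x) * R x y) = 0"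
    and Rg: "\<And>i x. i < m \<Longrightarrow> x \<in> X \<Longrightarrow> (\<Sum>y\<in>Y. R x y * cnj (g i y)) = 0"
    unfolding partial_svd_def R_def by auto
  have fu: "inner_on X (f i) u = 0" if "i < m" for i
    by (rule inner_on_eq_0_if_annihilates[where c = "complex_of_real \<sigma>" and Y = Y and R = R
          and b = "\<lambda>y. cnj (h y)"])
      (use \<sigma> fR[OF that] hR in auto)
  have gh: "inner_on Y (g i) h = 0" if "i < m" for i
    by (rule inner_on_eq_0_if_annihilates[where c = "complex_of_real \<sigma>" and Y = X
          and R = "\<lambda>y x. R x y" and b = "\<lambda>x. cnj (u x)"])
      (use \<sigma> Rg[OF that] uR in \<open>auto simp: mult.commute\<close>)
  have "partial_svd X Y M (Suc m) (\<alpha>(m := \<sigma>)) (f(m := u)) (g(m := h))"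
    unfolding partial_svd_def svd_residual_extend R_def[symmetric]
  proof (intro conjI allI impI ballI)
    show "orthonormal_on X (f(m := u)) (Suc m)" by (rule orthonormal_on_extend[OF f u fu])
    show "orthonormal_on Y (g(m := h)) (Suc m)" by (rule orthonormal_on_extend[OF g h gh])
  next
    fix i y assume "i < Suc m" "y \<in> Y"
    thus "(\<Sum>x\<in>X. cnj ((f(m := u)) i x) * (R x y - complex_of_real \<sigma> * u x * h y)) = 0"
      unfolding sum_cnj_mult_rank_one_diff using fR fu uR u by (auto simp: less_Suc_eq)
  next
    fix i x assume "i < Suc m" "x \<in> X"
    thus "(\<Sum>y\<in>Y. (R x y - complex_of_real \<sigma> * u x * h y) * cnj ((g(m := h)) i y)) = 0"
      unfolding sum_rank_one_diff_mult_cnj using Rg gh hR h by (auto simp: less_Suc_eq)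
  qed (use \<alpha> \<sigma> in \<open>auto simp: less_Suc_eq\<close>)
  thus ?thesis by blast
qed

lemma singular_value_decomposition:
  fixes M :: "'x \<Rightarrow> 'y \<Rightarrow> complex"
  assumes "finite X" "finite Y"
  obtains k \<alpha> f g where "\<forall>i<k. 0 < \<alpha> i" "orthonormal_on X f k" "orthonormal_on Y g k"
    "\<And>x y. x \<in> X \<Longrightarrow> y \<in> Y \<Longrightarrow> M x y = (\<Sum>i<k. complex_of_real (\<alpha> i) * f i x * g i y)"
proof -
  have "partial_svd X Y M 0 \<alpha> f g" for \<alpha> f g
    unfolding partial_svd_def orthonormal_on_def by simp
  moreover have "m \<le> card X" if "partial_svd X Y M m \<alpha> f g" for m \<alpha> f g
    using that orthonormal_on_card_le[OF assms(1)] unfolding partial_svd_def by blast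
  ultimately obtain m where "\<exists>\<alpha> f g. partial_svd X Y M m \<alpha> f g"
    and greatest: "\<And>m'. \<exists>\<alpha> f g. partial_svd X Y M m' \<alpha> f g \<Longrightarrow> m' \<le> m"
    using Nat.ex_has_greatest_nat[of "\<lambda>m. \<exists>\<alpha> f g. partial_svd X Y M m \<alpha> f g" 0 "card X"] by blast
  then obtain \<alpha> f g where P: "partial_svd X Y M m \<alpha> f g" by blast
  have "svd_residual M \<alpha> f g m x y = 0" if "x \<in> X" "y \<in> Y" for x y
    using partial_svd_step[OF assms P that] greatest[of "Suc m"] by fastforce
  hence "M x y = (\<Sum>i<m. complex_of_real (\<alpha> i) * f i x * g i y)" if "x \<in> X" "y \<in> Y" for x y
    using that unfolding svd_residual_def by simp
  with P show ?thesis using that[of m \<alpha> f g] unfolding partial_svd_def by blast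
qed

section \<open>Schmidt decomposition and entanglement entropy\<close>

lemma sum_Pow_split:
  assumes "A \<subseteq> V"
  shows "(\<Sum>S\<in>Pow V. h S) = (\<Sum>P\<in>Pow A. \<Sum>Q\<in>Pow (V - A). h (P \<union> Q))"
proof -
  have "bij_betw (\<lambda>(P, Q). P \<union> Q) (Pow A \<times> Pow (V - A)) (Pow V)"
    by (rule bij_betw_byWitness[where f' = "\<lambda>S. (S \<inter> A, S - A)"]) (use assms in auto)
  thus ?thesis by (simp add: sum.reindex_bij_betw[symmetric] sum.cartesian_product split_def)
qed

lemma schmidt_decomp_exists:
  assumes "finite V" "A \<subseteq> V"
  shows "\<exists>k \<alpha> f g. schmidt_decomp V A \<psi> k \<alpha> f g"
proof -
  obtain k \<alpha> f g where "\<forall>i<k. 0 < \<alpha> i"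
    "orthonormal_on (Pow A) f k" "orthonormal_on (Pow (V - A)) g k"
    and M: "\<And>P Q. P \<in> Pow A \<Longrightarrow> Q \<in> Pow (V - A) \<Longrightarrow>
      \<psi> (P \<union> Q) = (\<Sum>i<k. complex_of_real (\<alpha> i) * f i P * g i Q)"
    using singular_value_decomposition[of "Pow A" "Pow (V - A)" "\<lambda>P Q. \<psi> (P \<union> Q)"]
      assms finite_subset by blast
  moreover have "\<psi> S = (\<Sum>i<k. complex_of_real (\<alpha> i) * f i (S \<inter> A) * g i (S - A))" if "S \<subseteq> V" for S
  proof -
    have "S \<inter> A \<in> Pow A" "S - A \<in> Pow (V - A)" using that by auto
    from M[OF this] show ?thesis by (simp add: Int_Diff_Un)
  qed
  ultimately show ?thesis unfolding schmidt_decomp_def orthonormal_family_iff by blast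
qed

lemma schmidt_coefficients_sum_sq:
  assumes "pure_state V \<psi>" "A \<subseteq> V" "schmidt_decomp V A \<psi> k \<alpha> f g"
  shows "(\<Sum>i<k. (\<alpha> i)\<^sup>2) = 1"
proof -
  from assms(3) have f: "orthonormal_on (Pow A) f k" and g: "orthonormal_on (Pow (V - A)) g k"
    and \<psi>: "\<And>S. S \<subseteq> V \<Longrightarrow> \<psi> S = (\<Sum>i<k. complex_of_real (\<alpha> i) * f i (S \<inter> A) * g i (S - A))"
    unfolding schmidt_decomp_def orthonormal_family_iff by auto
  have "1 = (\<Sum>S\<in>Pow V. (cmod (\<psi> S))\<^sup>2)" using assms(1) unfolding pure_state_def by simp
  also have "\<dots> = (\<Sum>P\<in>Pow A. \<Sum>Q\<in>Pow (V - A). (cmod (\<psi> (P \<union> Q)))\<^sup>2)"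
    by (rule sum_Pow_split[OF assms(2)])
  also have "\<dots> = (\<Sum>P\<in>Pow A. sqnorm_on (Pow (V - A)) (\<lambda>Q. \<Sum>i<k. (\<alpha> i * f i P) * g i Q))"
    unfolding sqnorm_on_def
  proof (intro sum.cong refl)
    fix P Q assume "P \<in> Pow A" "Q \<in> Pow (V - A)"
    hence "P \<union> Q \<subseteq> V" "(P \<union> Q) \<inter> A = P" "(P \<union> Q) - A = Q" using assms(2) by auto
    thus "(cmod (\<psi> (P \<union> Q)))\<^sup>2 = (cmod (\<Sum>i<k. (\<alpha> i * f i P) * g i Q))\<^sup>2"
      using \<psi>[of "P \<union> Q"] by (simp add: mult.assoc)
  qed
  also have "\<dots> = (\<Sum>P\<in>Pow A. \<Sum>i<k. (\<alpha> i)\<^sup>2 * (cmod (f i P))\<^sup>2)"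
    by (simp add: sqnorm_on_orthonormal_combination[OF g] norm_mult power_mult_distrib)
  also have "\<dots> = (\<Sum>i<k. (\<alpha> i)\<^sup>2 * sqnorm_on (Pow A) (f i))"
    unfolding sqnorm_on_def by (simp add: sum.swap[of _ "Pow A"] sum_distrib_left)
  also have "\<dots> = (\<Sum>i<k. (\<alpha> i)\<^sup>2)"
    using orthonormal_on_sqnorm[OF f] by simp
  finally show ?thesis ..
qed

lemma schmidt_rank_le:
  assumes "finite V" "A \<subseteq> V" "schmidt_decomp V A \<psi> k \<alpha> f g"
  shows "k \<le> 2 ^ card A" "k \<le> 2 ^ card (V - A)"
proof -
  from assms(3) have "orthonormal_on (Pow A) f k" "orthonormal_on (Pow (V - A)) g k"
    unfolding schmidt_decomp_def orthonormal_family_iff by auto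
  moreover have "finite (Pow A)" "finite (Pow (V - A))"
    using assms(1,2) finite_subset by auto
  ultimately show "k \<le> 2 ^ card A" "k \<le> 2 ^ card (V - A)"
    using orthonormal_on_card_le by (metis card_Pow finite_Pow_iff)+
qed

lemma entropy_nonneg:
  fixes p :: "nat \<Rightarrow> real"
  assumes "\<And>i. i < k \<Longrightarrow> 0 < p i" "(\<Sum>i<k. p i) = 1"
  shows "0 \<le> - (\<Sum>i<k. p i * log 2 (p i))"
proof -
  have "p i * log 2 (p i) \<le> 0" if "i < k" for i
  proof -
    have "p i \<le> (\<Sum>j<k. p j)"
      using that assms(1) by (intro member_le_sum) (auto intro: less_imp_le)
    hence "log 2 (p i) \<le> 0" using assms that by simp
    thus ?thesis using assms(1)[OF that] by (simp add: mult_nonneg_nonpos)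
  qed
  hence "(\<Sum>i<k. p i * log 2 (p i)) \<le> 0" by (intro sum_nonpos) auto
  thus ?thesis by simp
qed

lemma entropy_le_log_card:
  fixes p :: "nat \<Rightarrow> real"
  assumes p: "\<And>i. i < k \<Longrightarrow> 0 < p i" and sum: "(\<Sum>i<k. p i) = 1"
  shows "- (\<Sum>i<k. p i * log 2 (p i)) \<le> log 2 k"
proof -
  have k: "0 < k" using sum by (cases k) auto
  (* Gibbs' inequality against the uniform distribution on k points *)
  have gibbs: "p i * ln (1 / (k * p i)) \<le> 1 / k - p i" if "i < k" for i
  proof -
    have "p i * ln (1 / (k * p i)) \<le> p i * (1 / (k * p i) - 1)"
      using p[OF that] k by (intro mult_left_mono ln_le_minus_one) auto
    also have "\<dots> = 1 / k - p i" using p[OF that] k by (simp add: field_simps)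
    finally show ?thesis .
  qed
  have "- (\<Sum>i<k. p i * ln (p i)) - ln k = (\<Sum>i<k. - (p i * ln (p i)) - p i * ln k)"
    using sum by (simp add: sum_subtractf sum_negf sum_distrib_right[symmetric])
  also have "\<dots> = (\<Sum>i<k. p i * ln (1 / (k * p i)))"
    using p k by (intro sum.cong refl) (simp add: ln_div ln_mult algebra_simps)
  also have "\<dots> \<le> (\<Sum>i<k. 1 / k - p i)"
    using gibbs by (intro sum_mono) auto
  also have "\<dots> = 0" using sum k by (simp add: sum_subtractf)
  finally have "- (\<Sum>i<k. p i * ln (p i)) / ln 2 \<le> ln k / ln 2"
    by (intro divide_right_mono) auto
  thus ?thesis unfolding log_def by (simp add: sum_divide_distrib)
qed

lemma ent_entropyE:
  assumes "pure_state V \<psi>" "A \<subseteq> V"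
  obtains k \<alpha> f g where "schmidt_decomp V A \<psi> k \<alpha> f g"
    "ent_entropy V A \<psi> = - (\<Sum>i<k. (\<alpha> i)\<^sup>2 * log 2 ((\<alpha> i)\<^sup>2))"
proof -
  have "finite V" using assms(1) unfolding pure_state_def by blast
  hence "\<exists>h k \<alpha> f g. schmidt_decomp V A \<psi> k \<alpha> f g \<and>
      h = - (\<Sum>i<k. (\<alpha> i)\<^sup>2 * log 2 ((\<alpha> i)\<^sup>2))"
    using schmidt_decomp_exists[OF _ assms(2)] by blast
  from someI_ex[OF this] show ?thesis using that unfolding ent_entropy_def by blast
qed

lemma ent_entropy_nonneg:
  assumes "pure_state V \<psi>" "A \<subseteq> V"
  shows "0 \<le> ent_entropy V A \<psi>"
proof -
  obtain k \<alpha> f g where sd: "schmidt_decomp V A \<psi> k \<alpha> f g"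
    and h: "ent_entropy V A \<psi> = - (\<Sum>i<k. (\<alpha> i)\<^sup>2 * log 2 ((\<alpha> i)\<^sup>2))"
    using ent_entropyE[OF assms] .
  have "\<And>i. i < k \<Longrightarrow> 0 < (\<alpha> i)\<^sup>2" using sd unfolding schmidt_decomp_def by force
  from entropy_nonneg[OF this schmidt_coefficients_sum_sq[OF assms sd]] show ?thesis
    unfolding h .
qed

lemma ent_entropy_le_card:
  assumes "pure_state V \<psi>" "A \<subseteq> V"
  shows "ent_entropy V A \<psi> \<le> card A" "ent_entropy V A \<psi> \<le> card (V - A)"
proof -
  obtain k \<alpha> f g where sd: "schmidt_decomp V A \<psi> k \<alpha> f g"
    and h: "ent_entropy V A \<psi> = - (\<Sum>i<k. (\<alpha> i)\<^sup>2 * log 2 ((\<alpha> i)\<^sup>2))"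
    using ent_entropyE[OF assms] .
  have pos: "\<And>i. i < k \<Longrightarrow> 0 < (\<alpha> i)\<^sup>2" using sd unfolding schmidt_decomp_def by force
  have sum: "(\<Sum>i<k. (\<alpha> i)\<^sup>2) = 1" by (rule schmidt_coefficients_sum_sq[OF assms sd])
  hence "0 < k" by (cases k) auto
  have "ent_entropy V A \<psi> \<le> m" if "k \<le> 2 ^ m" for m
  proof -
    have "log 2 k \<le> log 2 (2 ^ m)"
      using \<open>0 < k\<close> that by (subst log_le_cancel_iff) (auto simp flip: of_nat_power)
    thus ?thesis using entropy_le_log_card[OF pos sum] unfolding h by simp
  qed
  moreover have "finite V" using assms(1) unfolding pure_state_def by blast
  ultimately show "ent_entropy V A \<psi> \<le> card A" "ent_entropy V A \<psi> \<le> card (V - A)"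
    using schmidt_rank_le[OF _ assms(2) sd] by auto
qed

section \<open>Trees given by a parent function\<close>

definition parent_edges :: "nat set \<Rightarrow> (nat \<Rightarrow> nat) \<Rightarrow> nat set set" where
  "parent_edges N p = (\<lambda>v. {v, p v}) ` (N - {0})"

inductive_set descendants :: "nat set \<Rightarrow> (nat \<Rightarrow> nat) \<Rightarrow> nat \<Rightarrow> nat set" for N p v where
  self: "v \<in> descendants N p v"
| child: "w \<in> N \<Longrightarrow> w \<noteq> 0 \<Longrightarrow> p w \<in> descendants N p v \<Longrightarrow> w \<in> descendants N p v"

lemma adj_rel_rtrancl_sym: "(a, b) \<in> (adj_rel E)\<^sup>* \<Longrightarrow> (b, a) \<in> (adj_rel E)\<^sup>*"
proof -
  have "sym (adj_rel E)" unfolding adj_rel_def sym_def by (auto simp: insert_commute)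
  thus "(a, b) \<in> (adj_rel E)\<^sup>* \<Longrightarrow> (b, a) \<in> (adj_rel E)\<^sup>*"
    using sym_rtrancl unfolding sym_def by blast
qed

lemma edge_side_subset:
  assumes "bij_betw L (leaves N E) V"
  shows "edge_side N E L e \<subseteq> V"
proof -
  have "edge_side N E L e \<subseteq> L ` leaves N E" unfolding edge_side_def by (rule image_mono) blast
  thus ?thesis using bij_betw_imp_surj_on[OF assms] by simp
qed

locale parent_tree =
  fixes N :: "nat set" and p :: "nat \<Rightarrow> nat"
  assumes finite_N: "finite N" and root_in_N: "0 \<in> N"
    and parent_in_N: "\<And>v. v \<in> N \<Longrightarrow> v \<noteq> 0 \<Longrightarrow> p v \<in> N"
    and parent_less: "\<And>v. v \<in> N \<Longrightarrow> v \<noteq> 0 \<Longrightarrow> p v < v"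
begin

abbreviation E :: "nat set set" where "E \<equiv> parent_edges N p"

lemma descendants_ge: "w \<in> descendants N p v \<Longrightarrow> v \<le> w"
  by (induction rule: descendants.induct) (auto dest: parent_less)

lemma parent_notin_descendants: "v \<in> N \<Longrightarrow> v \<noteq> 0 \<Longrightarrow> p v \<notin> descendants N p v"
  using descendants_ge parent_less by fastforce

lemma inj_on_parent_edge: "inj_on (\<lambda>v. {v, p v}) (N - {0})"
proof (rule inj_onI)
  fix v w assume "v \<in> N - {0}" "w \<in> N - {0}" "{v, p v} = {w, p w}"
  thus "v = w" using parent_less[of v] parent_less[of w] by (auto simp: doubleton_eq_iff)
qed

lemma rtrancl_to_root:
  assumes "\<And>u. u \<in> N \<Longrightarrow> u \<noteq> 0 \<Longrightarrow> u \<notin> D \<Longrightarrow> {u, p u} \<in> F \<and> p u \<notin> D"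
  shows "w \<in> N \<Longrightarrow> w \<notin> D \<Longrightarrow> (w, 0) \<in> (adj_rel F)\<^sup>*"
proof (induction w rule: less_induct)
  case (less w)
  show ?case
  proof (cases "w = 0")
    case False
    hence "(w, p w) \<in> adj_rel F" "(p w, 0) \<in> (adj_rel F)\<^sup>*"
      using assms less parent_in_N parent_less unfolding adj_rel_def by auto
    thus ?thesis by (rule converse_rtrancl_into_rtrancl)
  qed simp
qed

lemma descendants_closed_without_edge:
  assumes "v \<in> N" "v \<noteq> 0" and ab: "(a, b) \<in> (adj_rel (E - {{v, p v}}))\<^sup>*"
  shows "a \<in> descendants N p v \<longleftrightarrow> b \<in> descendants N p v"
  using ab
proof (induction rule: rtrancl_induct)
  case (step b c)
  then obtain w where w: "w \<in> N" "w \<noteq> 0" "{b, c} = {w, p w}" "w \<noteq> v"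
    unfolding adj_rel_def parent_edges_def by auto
  have "w \<in> descendants N p v \<longleftrightarrow> p w \<in> descendants N p v"
    using w by (auto elim: descendants.cases intro: descendants.child)
  thus ?case using step.IH w(3) by (auto simp: doubleton_eq_iff)
qed simp

lemma is_tree: "is_tree N E"
  unfolding is_tree_def
proof (intro conjI ballI allI impI)
  fix e assume "e \<in> E"
  thus "\<exists>x y. e = {x, y} \<and> x \<noteq> y \<and> x \<in> N \<and> y \<in> N"
    unfolding parent_edges_def using parent_in_N parent_less by fastforce
next
  have "(w, 0) \<in> (adj_rel E)\<^sup>*" if "w \<in> N" for w
    using rtrancl_to_root[of "{}" E] that unfolding parent_edges_def by blast
  thus "(x, y) \<in> (adj_rel E)\<^sup>*" if "x \<in> N" "y \<in> N" for x y
    using that adj_rel_rtrancl_sym by (meson rtrancl_trans)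
next
  fix e x y assume "e \<in> E" "e = {x, y}"
  then obtain v where v: "v \<in> N" "v \<noteq> 0" "{x, y} = {v, p v}" unfolding parent_edges_def by auto
  show "(x, y) \<notin> (adj_rel (E - {e}))\<^sup>*"
  proof
    assume "(x, y) \<in> (adj_rel (E - {e}))\<^sup>*"
    with descendants_closed_without_edge[OF v(1,2)] v(3) \<open>e = {x, y}\<close>
    have "x \<in> descendants N p v \<longleftrightarrow> y \<in> descendants N p v" by simp
    thus False using v parent_notin_descendants descendants.self by (auto simp: doubleton_eq_iff)
  qed
qed (use finite_N root_in_N in auto)

lemma degree_parent_edges:
  "Defs.degree E v = card {w \<in> N - {0}. w = v \<or> p w = v}"
proof -
  have "{e \<in> E. v \<in> e} = (\<lambda>w. {w, p w}) ` {w \<in> N - {0}. w = v \<or> p w = v}"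
    unfolding parent_edges_def by auto
  moreover have "inj_on (\<lambda>w. {w, p w}) {w \<in> N - {0}. w = v \<or> p w = v}"
    by (rule inj_on_subset[OF inj_on_parent_edge]) auto
  ultimately show ?thesis unfolding Defs.degree_def by (simp add: card_image)
qed

lemma rtrancl_to_root_without_edge:
  assumes "v \<in> N" "v \<noteq> 0" "w \<in> N" "w \<notin> descendants N p v"
  shows "(w, 0) \<in> (adj_rel (E - {{v, p v}}))\<^sup>*"
proof (rule rtrancl_to_root[OF _ assms(3,4)])
  fix u assume u: "u \<in> N" "u \<noteq> 0" "u \<notin> descendants N p v"
  hence "{u, p u} \<noteq> {v, p v}"
    using inj_on_parent_edge assms(1,2) descendants.self unfolding inj_on_def by blast
  thus "{u, p u} \<in> E - {{v, p v}} \<and> p u \<notin> descendants N p v"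
    using u descendants.child unfolding parent_edges_def by blast
qed

lemma edge_side_cases:
  assumes "v \<in> N" "v \<noteq> 0"
  shows "edge_side N E L {v, p v} \<subseteq> L ` (leaves N E \<inter> descendants N p v) \<or>
         L ` (leaves N E - descendants N p v) \<subseteq> edge_side N E L {v, p v}"
proof -
  define F where "F = E - {{v, p v}}"
  define u where "u = (SOME u. u \<in> {v, p v})"
  have side: "edge_side N E L {v, p v} = L ` {w \<in> leaves N E. (u, w) \<in> (adj_rel F)\<^sup>*}"
    unfolding edge_side_def u_def F_def ..
  have "u \<in> {v, p v}" unfolding u_def by (rule someI[of _ v]) simp
  thus ?thesis
  proof
    assume "u = v"
    have "w \<in> descendants N p v" if "(v, w) \<in> (adj_rel F)\<^sup>*" for w
      using descendants_closed_without_edge[OF assms that[unfolded F_def]] descendants.self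
      by blast
    hence "edge_side N E L {v, p v} \<subseteq> L ` (leaves N E \<inter> descendants N p v)"
      unfolding side \<open>u = v\<close> by blast
    thus ?thesis ..
  next
    assume "u \<in> {p v}"
    have "(p v, 0) \<in> (adj_rel F)\<^sup>*"
      unfolding F_def using assms parent_in_N parent_notin_descendants
      by (intro rtrancl_to_root_without_edge)
    moreover have "(0, w) \<in> (adj_rel F)\<^sup>*" if "w \<in> leaves N E - descendants N p v" for w
      using that unfolding F_def leaves_def
      by (auto intro!: adj_rel_rtrancl_sym[OF rtrancl_to_root_without_edge[OF assms]])
    ultimately have "(u, w) \<in> (adj_rel F)\<^sup>*" if "w \<in> leaves N E - descendants N p v" for w
      using that \<open>u \<in> {p v}\<close> rtrancl_trans by fastforce
    hence "L ` (leaves N E - descendants N p v) \<subseteq> edge_side N E L {v, p v}"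
      unfolding side by blast
    thus ?thesis ..
  qed
qed

lemma ent_entropy_edge_side_le:
  assumes "pure_state V \<psi>" "bij_betw L (leaves N E) V" "v \<in> N" "v \<noteq> 0"
  shows "ent_entropy V (edge_side N E L {v, p v}) \<psi> \<le> card (leaves N E \<inter> descendants N p v)"
proof -
  define A where "A = edge_side N E L {v, p v}"
  define D where "D = leaves N E \<inter> descendants N p v"
  have "A \<subseteq> V" unfolding A_def by (rule edge_side_subset[OF assms(2)])
  have "finite D" unfolding D_def leaves_def using finite_N by auto
  hence card_LD: "card (L ` D) \<le> card D" by (rule card_image_le)
  have "A \<subseteq> L ` D \<or> L ` (leaves N E - descendants N p v) \<subseteq> A"
    unfolding A_def D_def by (rule edge_side_cases[OF assms(3,4)])
  thus ?thesis
  proof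
    assume 1: "A \<subseteq> L ` D"
    hence "card A \<le> card (L ` D)" using \<open>finite D\<close> by (intro card_mono) auto
    thus ?thesis using ent_entropy_le_card(1)[OF assms(1) \<open>A \<subseteq> V\<close>] card_LD
      unfolding A_def D_def by linarith
  next
    assume 2: "L ` (leaves N E - descendants N p v) \<subseteq> A"
    have "V - A \<subseteq> L ` D"
    proof
      fix x assume x: "x \<in> V - A"
      then obtain w where "w \<in> leaves N E" "x = L w"
        using bij_betw_imp_surj_on[OF assms(2)] by blast
      moreover from this have "w \<in> descendants N p v" using 2 x by blast
      ultimately show "x \<in> L ` D" unfolding D_def by blast
    qed
    hence "card (V - A) \<le> card (L ` D)" using \<open>finite D\<close> by (intro card_mono) auto
    thus ?thesis using ent_entropy_le_card(2)[OF assms(1) \<open>A \<subseteq> V\<close>] card_LD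
      unfolding A_def D_def by linarith
  qed
qed

end

lemma bd_width_nonneg:
  assumes "pure_state V \<psi>" "V \<noteq> {}" "branch_decomp V N E L"
  shows "0 \<le> bd_width V \<psi> N E L"
proof -
  from assms(3) have tree: "is_tree N E" and bij: "bij_betw L (leaves N E) V"
    unfolding branch_decomp_def subcubic_tree_def by blast+
  have "E \<subseteq> Pow N"
  proof
    fix e assume "e \<in> E"
    then obtain x y where "e = {x, y}" "x \<in> N" "y \<in> N" using tree unfolding is_tree_def by blast
    thus "e \<in> Pow N" by simp
  qed
  moreover have "finite N" using tree unfolding is_tree_def by blast
  ultimately have "finite E" by (meson finite_Pow_iff finite_subset)
  obtain v where "v \<in> leaves N E" using bij assms(2) unfolding bij_betw_def by blast
  hence "card {e \<in> E. v \<in> e} = 1" unfolding leaves_def Defs.degree_def by simp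
  hence "{e \<in> E. v \<in> e} \<noteq> {}" by force
  then obtain e where "e \<in> E" by blast
  have "0 \<le> ent_entropy V (edge_side N E L e) \<psi>"
    by (rule ent_entropy_nonneg[OF assms(1) edge_side_subset[OF bij]])
  also have "\<dots> \<le> bd_width V \<psi> N E L"
    unfolding bd_width_def using \<open>finite E\<close> \<open>e \<in> E\<close> by (intro Max_ge) auto
  finally show ?thesis .
qed

lemma ent_width_le_bd_width:
  assumes "pure_state V \<psi>" "V \<noteq> {}" "branch_decomp V N E L"
  shows "ent_width V \<psi> \<le> bd_width V \<psi> N E L"
  unfolding ent_width_def
proof (rule cInf_lower)
  show "bdd_below {bd_width V \<psi> N E L |N E L. branch_decomp V N E L}"
    using bd_width_nonneg[OF assms(1,2)] unfolding bdd_below_def by blast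
qed (use assms(3) in blast)

lemma ex_bij_betw_greaterThanAtMost:
  assumes "finite V"
  obtains L :: "nat \<Rightarrow> 'a" where "bij_betw L {m<..m + card V} V"
proof -
  obtain h where h: "bij_betw h {0..<card V} V" using ex_bij_betw_nat_finite[OF assms] by blast
  have "bij_betw (\<lambda>w. w - Suc m) {m<..m + card V} {0..<card V}"
    by (rule bij_betw_byWitness[where f' = "\<lambda>i. i + Suc m"]) auto
  from bij_betw_trans[OF this h] show ?thesis by (rule that)
qed

section \<open>A comb-shaped branch decomposition\<close>

(* Node 0 is the root, node v in 1..n is the spine node of qubit v - 1, and node v in n+1..2n is
   the leaf of qubit v - n - 1, hanging from spine node v - n. The qubits are cut into blocks of q
   consecutive ones, numbered by comb_block; the spine of each block is a path hanging from the
   root. *)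
definition comb_parent :: "nat \<Rightarrow> nat \<Rightarrow> nat \<Rightarrow> nat" where
  "comb_parent n q v = (if n < v then v - n else if (v - 1) mod q = 0 then 0 else v - 1)"

definition comb_block :: "nat \<Rightarrow> nat \<Rightarrow> nat \<Rightarrow> nat" where
  "comb_block n q v = ((if n < v then v - n else v) - 1) div q"

locale comb_tree =
  fixes n q :: nat
  assumes q_pos: "0 < q" and q_less: "q < n" and n_le: "n \<le> 3 * q"
begin

abbreviation p :: "nat \<Rightarrow> nat" where "p \<equiv> comb_parent n q"

sublocale parent_tree "{..2 * n}" p
  by unfold_locales (auto simp: comb_parent_def)

lemma children_leaf:
  assumes "n < v" "v \<le> 2 * n"
  shows "{w \<in> {..2 * n} - {0}. w = v \<or> p w = v} = {v}"
  using assms by (auto simp: comb_parent_def)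

lemma children_spine:
  assumes "0 < v" "v \<le> n"
  shows "{v, v + n} \<subseteq> {w \<in> {..2 * n} - {0}. w = v \<or> p w = v}"
    "{w \<in> {..2 * n} - {0}. w = v \<or> p w = v} \<subseteq> {v, v + n, v + 1}"
  using assms by (auto simp: comb_parent_def split: if_splits)

lemma children_root:
  "{1, q + 1} \<subseteq> {w \<in> {..2 * n} - {0}. w = 0 \<or> p w = 0}"
  "{w \<in> {..2 * n} - {0}. w = 0 \<or> p w = 0} \<subseteq> {1, q + 1, 2 * q + 1}"
proof -
  show "{1, q + 1} \<subseteq> {w \<in> {..2 * n} - {0}. w = 0 \<or> p w = 0}"
    using q_pos q_less by (auto simp: comb_parent_def)
  have "w \<in> {1, q + 1, 2 * q + 1}" if w: "0 < w" "w \<le> n" "q dvd w - 1" for w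
  proof -
    obtain k where k: "w - 1 = q * k" using w(3) by blast
    hence "q * k < q * 3" using w n_le by linarith
    hence "k < 3" by simp
    thus ?thesis using k w(1) by (auto simp: less_Suc_eq numeral_3_eq_3)
  qed
  moreover have "0 < w \<and> w \<le> n \<and> q dvd w - 1" if "w \<in> {..2 * n} - {0}" "p w = 0" for w
    using that by (auto simp: comb_parent_def split: if_splits)
  ultimately show "{w \<in> {..2 * n} - {0}. w = 0 \<or> p w = 0} \<subseteq> {1, q + 1, 2 * q + 1}"
    by blast
qed

lemma degree_bounds:
  assumes "v \<le> 2 * n"
  shows "Defs.degree E v = 1 \<longleftrightarrow> n < v" "Defs.degree E v \<le> 3"
proof -
  let ?C = "{w \<in> {..2 * n} - {0}. w = v \<or> p w = v}"
  have "finite ?C" by simp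
  have "card ?C = 1 \<longleftrightarrow> n < v" "card ?C \<le> 3"
  proof -
    consider "n < v" | "0 < v" "v \<le> n" | "v = 0" by linarith
    hence "if n < v then card ?C = 1 else 2 \<le> card ?C \<and> card ?C \<le> 3"
    proof cases
      case 2
      have "card {v, v + n, v + 1} \<le> 3" by (simp add: card_insert_if)
      with card_mono[OF _ children_spine(1)[OF 2]] card_mono[OF _ children_spine(2)[OF 2]] 2
      show ?thesis by auto
    next
      case 3
      have "card {1, q + 1, 2 * q + 1} \<le> 3" by (simp add: card_insert_if)
      with card_mono[OF _ children_root(1)] card_mono[OF _ children_root(2)] 3 q_pos
      show ?thesis by auto
    qed (use children_leaf assms in auto)
    thus "card ?C = 1 \<longleftrightarrow> n < v" "card ?C \<le> 3" by (auto split: if_splits)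
  qed
  thus "Defs.degree E v = 1 \<longleftrightarrow> n < v" "Defs.degree E v \<le> 3"
    unfolding degree_parent_edges by simp_all
qed

lemma leaves_comb: "leaves {..2 * n} E = {n<..2 * n}"
  unfolding leaves_def using degree_bounds(1) by auto

lemma subcubic_tree_comb: "subcubic_tree {..2 * n} E"
  unfolding subcubic_tree_def using is_tree degree_bounds(2) by auto

lemma comb_block_parent:
  assumes "w \<le> 2 * n" "w \<noteq> 0" "p w \<noteq> 0"
  shows "comb_block n q (p w) = comb_block n q w"
proof (cases "n < w")
  case False
  with assms have "p w = w - 1" "Suc (w - 2) = w - 1" "(w - 1) mod q \<noteq> 0"
    by (auto simp: comb_parent_def split: if_splits)
  moreover from this have "(w - 1) div q = (w - 2) div q" using div_Suc[of "w - 2" q] by simp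
  ultimately show ?thesis using False by (simp add: comb_block_def numeral_2_eq_2)
qed (use assms in \<open>simp add: comb_parent_def comb_block_def\<close>)

lemma comb_block_descendants:
  assumes "v \<noteq> 0"
  shows "w \<in> descendants {..2 * n} p v \<Longrightarrow> comb_block n q w = comb_block n q v"
proof (induction rule: descendants.induct)
  case (child w)
  hence "p w \<noteq> 0" using descendants_ge assms by fastforce
  thus ?case using comb_block_parent child by simp
qed simp

lemma card_leaves_descendants_le:
  assumes "v \<noteq> 0"
  shows "card (leaves {..2 * n} E \<inter> descendants {..2 * n} p v) \<le> q"
proof -
  define b where "b = comb_block n q v"
  have "leaves {..2 * n} E \<inter> descendants {..2 * n} p v \<subseteq> (\<lambda>i. i + Suc n) ` {b * q..<b * q + q}"
  proof
    fix w assume w: "w \<in> leaves {..2 * n} E \<inter> descendants {..2 * n} p v"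
    hence "n < w" "comb_block n q w = b"
      using comb_block_descendants[OF assms] unfolding leaves_comb b_def by auto
    hence "(w - Suc n) div q = b" by (simp add: comb_block_def)
    hence "w - Suc n \<in> {b * q..<b * q + q}"
      using div_mult_mod_eq[of "w - Suc n" q] mod_less_divisor[OF q_pos, of "w - Suc n"] by auto
    thus "w \<in> (\<lambda>i. i + Suc n) ` {b * q..<b * q + q}"
      using \<open>n < w\<close> by (auto intro: image_eqI[of w _ "w - Suc n"])
  qed
  hence "card (leaves {..2 * n} E \<inter> descendants {..2 * n} p v)
      \<le> card ((\<lambda>i. i + Suc n) ` {b * q..<b * q + q})"
    by (intro card_mono) auto
  also have "\<dots> \<le> q" using card_image_le[of "{b * q..<b * q + q}" "\<lambda>i. i + Suc n"] by simp
  finally show ?thesis .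
qed

lemma branch_decomp_comb: "bij_betw L {n<..2 * n} V \<Longrightarrow> branch_decomp V {..2 * n} E L"
  unfolding branch_decomp_def leaves_comb using subcubic_tree_comb by blast

lemma bd_width_comb_le:
  assumes "pure_state V \<psi>" "bij_betw L {n<..2 * n} V"
  shows "bd_width V \<psi> {..2 * n} E L \<le> q"
proof -
  have "finite E" unfolding parent_edges_def by simp
  moreover have "E \<noteq> {}" using q_less unfolding parent_edges_def by auto
  moreover have "ent_entropy V (edge_side {..2 * n} E L e) \<psi> \<le> q" if "e \<in> E" for e
  proof -
    obtain v where "v \<le> 2 * n" "v \<noteq> 0" "e = {v, p v}"
      using \<open>e \<in> E\<close> unfolding parent_edges_def by auto
    thus ?thesis
      using ent_entropy_edge_side_le[OF assms(1), of L v] assms(2) card_leaves_descendants_le[of v]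
      unfolding leaves_comb by force
  qed
  ultimately show ?thesis unfolding bd_width_def by (simp add: Max_le_iff)
qed

end

theorem mainTheorem6:
  fixes V :: "'a set" and \<psi> :: "'a set \<Rightarrow> complex" and n :: nat
  assumes "finite V" and "card V = n" and "n \<ge> 2" and "pure_state V \<psi>"
  shows "ent_width V \<psi> \<le> real_of_int \<lceil>real n / 3\<rceil>"
proof -
  define q where "q = nat \<lceil>real n / 3\<rceil>"
  have q: "real q = real_of_int \<lceil>real n / 3\<rceil>" unfolding q_def by simp
  have "real n / 3 \<le> real q" "real q < real n / 3 + 1"
    unfolding q using ceiling_correct[of "real n / 3"] by linarith+
  moreover have "2 \<le> real n" using assms(3) by simp
  ultimately have "real 0 < real q" "real q < real n" "real n \<le> real (3 * q)" by auto
  hence "0 < q" "q < n" "n \<le> 3 * q" by (simp_all only: of_nat_less_iff of_nat_le_iff)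
  then interpret comb_tree n q by unfold_locales
  obtain L where L: "bij_betw L {n<..2 * n} V"
    using ex_bij_betw_greaterThanAtMost[OF assms(1), of n] assms(2) by (auto simp: mult_2)
  have "V \<noteq> {}" using assms(2,3) by auto
  from ent_width_le_bd_width[OF assms(4) this branch_decomp_comb[OF L]]
  have "ent_width V \<psi> \<le> bd_width V \<psi> {..2 * n} (parent_edges {..2 * n} (comb_parent n q)) L" .
  also have "\<dots> \<le> q" by (rule bd_width_comb_le[OF assms(4) L])
  finally show ?thesis unfolding q .
qed

end
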